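(* Let $\Gamma$ be a weighted digraph with vertex set $\{1,\dots,n\}$, $n>1$, without loops and with strictly positive arc weights, with Laplacian matrix $L$, in-forest dimension $d$, and let $\tilde J=\sigma_{n-d}^{-1}Q_{n-d}$. Let $\alpha\in\mathbb C$. Then (i) the eigenvalues of $L+\alpha\tilde J$, listed with multiplicities, are the nonzero eigenvalues of $L$ with their multiplicities together with $\alpha$ taken $d$ times (i.e., they are obtained from the eigenvalues $\lambda_1,\dots,\lambda_n$ of $L$ by replacing each $\lambda_i=0$ with $\alpha$); (ii) $L+\alpha\tilde J$ is nonsingular whenever $\alpha\neq0$.
   Context: $W=(w_{ij})$ is the matrix of arc weights ($w_{ij}>0$ iff there is an arc $i\to j$, else $0$). The Laplacian $L=(\ell_{ij})$: $\ell_{ij}=-w_{ij}$ for $j\ne i$, $\ell_{ii}=\sum_{k\ne i}w_{ik}$. The weight of a subgraph is the product of its arc weights (1 if no arcs); the weight of a set of subgraphs is the sum of their weights. A converging tree is a weakly connected digraph with one vertex (the root) of outdegree 0 and all others of outdegree 1; an in-forest is a spanning subgraph of $\Gamma$ whose weak components are converging trees. The in-forest dimension $d$ is the minimal number of trees in an in-forest (so in-forests have at most $n-d$ arcs). $\sigma_k$ is the total weight of in-forests with $k$ arcs; $Q_k=(q^k_{ij})$ with $q^k_{ij}$ the total weight of in-forests with $k$ arcs in which $i$ lies in a tree rooted at $j$. *)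

theory Defs
  imports "Jordan_Normal_Form.Char_Poly"
begin

text \<open>Vertices are 0..<n (the paper's 1..n shifted by one). W is an n x n real
 matrix of arc weights: there is an arc i -> j iff W(i,j) > 0.\<close>

definition arcs :: "real mat \<Rightarrow> nat \<Rightarrow> (nat \<times> nat) set" where
  "arcs W n = {(i,j). i < n \<and> j < n \<and> i \<noteq> j \<and> W $$ (i,j) > 0}"

definition outdeg :: "(nat \<times> nat) set \<Rightarrow> nat \<Rightarrow> nat" where
  "outdeg F i = card {j. (i,j) \<in> F}"

definition weak_comp :: "(nat \<times> nat) set \<Rightarrow> nat \<Rightarrow> nat \<Rightarrow> nat set" where
  "weak_comp F n i = {j. j < n \<and> (i,j) \<in> (F \<union> F\<inverse>)\<^sup>*}"

definition is_in_forest :: "real mat \<Rightarrow> nat \<Rightarrow> (nat \<times> nat) set \<Rightarrow> bool" where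
  "is_in_forest W n F \<longleftrightarrow> F \<subseteq> arcs W n \<and>
     (\<forall>i<n. outdeg F i \<le> 1) \<and>
     (\<forall>i<n. \<exists>!r. r \<in> weak_comp F n i \<and> outdeg F r = 0)"

definition num_trees :: "(nat \<times> nat) set \<Rightarrow> nat \<Rightarrow> nat" where
  "num_trees F n = card (weak_comp F n ` {..<n})"

definition in_forest_dim :: "real mat \<Rightarrow> nat \<Rightarrow> nat" where
  "in_forest_dim W n = Min {num_trees F n | F. is_in_forest W n F}"

definition fweight :: "real mat \<Rightarrow> (nat \<times> nat) set \<Rightarrow> real" where
  "fweight W F = (\<Prod>(i,j)\<in>F. W $$ (i,j))"

definition sigma :: "real mat \<Rightarrow> nat \<Rightarrow> nat \<Rightarrow> real" where
  "sigma W n k = (\<Sum>F\<in>{F. is_in_forest W n F \<and> card F = k}. fweight W F)"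

definition Qmat :: "real mat \<Rightarrow> nat \<Rightarrow> nat \<Rightarrow> real mat" where
  "Qmat W n k = mat n n (\<lambda>(i,j). \<Sum>F\<in>{F. is_in_forest W n F \<and> card F = k
        \<and> j \<in> weak_comp F n i \<and> outdeg F j = 0}. fweight W F)"

definition laplacian :: "real mat \<Rightarrow> nat \<Rightarrow> real mat" where
  "laplacian W n = mat n n (\<lambda>(i,j). if i = j then (\<Sum>k\<in>{..<n} - {i}. W $$ (i,k))
        else - W $$ (i,j))"

definition Jtilde :: "real mat \<Rightarrow> nat \<Rightarrow> real mat" where
  "Jtilde W n = (let d = in_forest_dim W n in
     (1 / sigma W n (n - d)) \<cdot>\<^sub>m Qmat W n (n - d))"

abbreviation cmat :: "real mat \<Rightarrow> complex mat" where
  "cmat A \<equiv> map_mat complex_of_real A"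

end

theory Submission
  imports Defs "Jordan_Normal_Form.Schur_Decomposition"
begin

text \<open>
  Splitting an in-forest at the out-arc of a vertex \<open>i\<close> proves the matrix-forest recurrence
  \<open>Q\<^sub>k\<^sub>+\<^sub>1 = \<sigma>\<^sub>k\<^sub>+\<^sub>1 I - L Q\<^sub>k\<close>: the forests in which \<open>i\<close> is a root contribute the right-hand side, the
  others cancel in pairs. No in-forest has more than \<open>m = n - d\<close> arcs, so \<open>Q\<^sub>m\<^sub>+\<^sub>1 = 0\<close>, hence
  \<open>L Q\<^sub>m = Q\<^sub>m L = 0\<close>, and \<open>I - J = L M\<close> with \<open>M\<close> commuting with \<open>L\<close>, where \<open>J = Q\<^sub>m / \<sigma>\<^sub>m\<close>.
  Thus \<open>J\<close> is an idempotent of trace \<open>d\<close> (every forest with \<open>m\<close> arcs has \<open>d\<close> roots) and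
  \<open>L + J\<close> is nonsingular. For such \<open>L\<close> and \<open>J\<close> the pairs \<open>(L + \<alpha>J, \<alpha>(I - J))\<close> and \<open>(L, \<alpha>I)\<close>
  have equal sums and products, so their characteristic polynomials have equal products, which
  gives \<open>\<chi>\<^sub>L\<^sub>+\<^sub>\<alpha>\<^sub>J X\<^sup>d = \<chi>\<^sub>L (X - \<alpha>)\<^sup>d\<close>; nonsingularity of \<open>L + J\<close> shows that \<open>X\<^sup>d\<close> is the exact power
  of \<open>X\<close> dividing \<open>\<chi>\<^sub>L\<close>.
\<close>

section \<open>Characteristic polynomials\<close>

lemma one_smult_mat: "(A :: 'a::monoid_mult mat) \<in> carrier_mat nr nc \<Longrightarrow> 1 \<cdot>\<^sub>m A = A"
  by (intro eq_matI) auto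

lemma smult_mat_mult_vec:
  fixes A :: "'a::comm_ring_1 mat"
  assumes "A \<in> carrier_mat nr nc" and "v \<in> carrier_vec nc"
  shows "(k \<cdot>\<^sub>m A) *\<^sub>v v = k \<cdot>\<^sub>v (A *\<^sub>v v)"
  by (rule eq_vecI) (use assms in auto)

lemma mult_mat_vec_zero: "(A :: 'a::semiring_0 mat) \<in> carrier_mat nr n \<Longrightarrow> A *\<^sub>v 0\<^sub>v n = 0\<^sub>v nr"
  by (intro eq_vecI) (auto simp: scalar_prod_def)

lemma index_mult_mat_sum:
  assumes "A \<in> carrier_mat nr n" "B \<in> carrier_mat n nc" "i < nr" "j < nc"
  shows "(A * B) $$ (i,j) = (\<Sum>k<n. A $$ (i,k) * B $$ (k,j))"
  using assms by (simp add: scalar_prod_def lessThan_atLeast0)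

definition mat_trace :: "'a::comm_ring_1 mat \<Rightarrow> 'a" where
  "mat_trace A = (\<Sum>i<dim_row A. A $$ (i,i))"

lemma mat_trace_mult_comm:
  assumes "A \<in> carrier_mat n m" and "B \<in> carrier_mat m n"
  shows "mat_trace (A * B) = mat_trace (B * A)"
proof -
  have "mat_trace (A * B) = (\<Sum>i<n. \<Sum>k<m. A $$ (i,k) * B $$ (k,i))"
    using assms unfolding mat_trace_def by (simp add: scalar_prod_def lessThan_atLeast0)
  also have "\<dots> = (\<Sum>k<m. \<Sum>i<n. B $$ (k,i) * A $$ (i,k))"
    by (subst sum.swap) (simp add: mult.commute)
  also have "\<dots> = mat_trace (B * A)"
    using assms unfolding mat_trace_def by (simp add: scalar_prod_def lessThan_atLeast0)
  finally show ?thesis .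
qed

lemma mat_trace_similar:
  assumes "similar_mat A B"
  shows "mat_trace A = mat_trace B"
proof -
  obtain n P Q where "{A, B, P, Q} \<subseteq> carrier_mat n n"
    and QP: "Q * P = 1\<^sub>m n" and "A = P * B * Q"
    using similar_matD[OF assms] by blast
  moreover from this have B: "B \<in> carrier_mat n n" and P: "P \<in> carrier_mat n n"
    and Q: "Q \<in> carrier_mat n n" by auto
  ultimately have "mat_trace A = mat_trace (P * (B * Q))"
    by (simp add: assoc_mult_mat[OF P B Q])
  also have "\<dots> = mat_trace (B * Q * P)"
    using B P Q by (intro mat_trace_mult_comm) auto
  also have "B * Q * P = B"
    using B P Q QP by (simp add: assoc_mult_mat[OF B Q P])
  finally show ?thesis .
qed

lemma mat_trace_eq_sum_diag: "mat_trace A = sum_list (diag_mat A)"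
  unfolding mat_trace_def diag_mat_def by (simp add: sum_list_sum_nth atLeast0LessThan)

lemma eigenvalue_of_mult_self_eq_smult:
  fixes A :: "'a::field mat"
  assumes A: "A \<in> carrier_mat n n" and AA: "A * A = c \<cdot>\<^sub>m A" and "eigenvalue A e"
  shows "e = 0 \<or> e = c"
proof -
  obtain v where v: "v \<in> carrier_vec n" "v \<noteq> 0\<^sub>v n" and Av: "A *\<^sub>v v = e \<cdot>\<^sub>v v"
    using \<open>eigenvalue A e\<close> A unfolding eigenvalue_def eigenvector_def by auto
  have "(e * e) \<cdot>\<^sub>v v = A *\<^sub>v (A *\<^sub>v v)"
    using A v by (simp add: Av mult_mat_vec smult_smult_assoc)
  also have "\<dots> = (c \<cdot>\<^sub>m A) *\<^sub>v v"
    using A v by (simp add: AA assoc_mult_mat_vec[symmetric])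
  also have "\<dots> = (c * e) \<cdot>\<^sub>v v"
    using A v by (simp add: smult_mat_mult_vec Av smult_smult_assoc)
  finally have ev: "(e * e) \<cdot>\<^sub>v v = (c * e) \<cdot>\<^sub>v v" .
  obtain i where "i < n" and "v $ i \<noteq> 0"
    using v by (auto simp: vec_eq_iff)
  with ev v have "e * e * v $ i = c * e * v $ i"
    by (metis carrier_vecD index_smult_vec(1))
  with \<open>v $ i \<noteq> 0\<close> have "e * e = c * e" by simp
  then show ?thesis by auto
qed

lemma prod_linear_factors_two_roots:
  fixes c :: "'a::comm_ring_1"
  assumes "set es \<subseteq> {0, c}"
  shows "(\<Prod>a\<leftarrow>es. [:-a, 1:]) = [:-c, 1:] ^ count_list es c * [:0, 1:] ^ (length es - count_list es c)"
  using assms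
proof (induction es)
  case (Cons a es)
  have "count_list es c \<le> length es" by (rule count_le_length)
  with Cons show ?case
    by (cases "a = c") (auto simp: Suc_diff_le algebra_simps)
qed simp

lemma sum_list_two_values:
  fixes c :: "'a::comm_ring_1"
  assumes "set es \<subseteq> {0, c}"
  shows "sum_list es = c * of_nat (count_list es c)"
  using assms by (induction es) (auto simp: algebra_simps)

lemma char_poly_mult_self_eq_smult:
  fixes A :: "complex mat"
  assumes A: "A \<in> carrier_mat n n" and AA: "A * A = c \<cdot>\<^sub>m A"
    and trace: "mat_trace A = c * of_nat t" and "t \<le> n"
  shows "char_poly A = [:-c, 1:] ^ t * [:0, 1:] ^ (n - t)"
proof -
  obtain B where B: "B \<in> carrier_mat n n" "upper_triangular B" "similar_mat A B"
    using char_poly_factorized[OF A] schur_decomposition_exists[OF A] by blast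
  define ds where "ds = diag_mat B"
  have cp: "char_poly A = (\<Prod>a\<leftarrow>ds. [:-a, 1:])" and "mat_trace A = sum_list ds"
    using B char_poly_similar char_poly_upper_triangular mat_trace_similar mat_trace_eq_sum_diag
    unfolding ds_def by metis+
  have "length ds = n" using B unfolding ds_def diag_mat_def by simp
  have roots: "set ds \<subseteq> {0, c}"
  proof
    fix e assume "e \<in> set ds"
    then have "poly (char_poly A) e = 0"
      unfolding cp by (simp add: poly_prod_list prod_list_zero_iff)
    then show "e \<in> {0, c}"
      using eigenvalue_of_mult_self_eq_smult[OF A AA] eigenvalue_root_char_poly[OF A] by auto
  qed
  define k where "k = count_list ds c"
  have "k \<le> n" using count_le_length \<open>length ds = n\<close> unfolding k_def by metis
  have cp_k: "char_poly A = [:-c, 1:] ^ k * [:0, 1:] ^ (n - k)"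
    using prod_linear_factors_two_roots[OF roots] cp \<open>length ds = n\<close> unfolding k_def by simp
  show ?thesis
  proof (cases "c = 0")
    case True
    then show ?thesis using cp_k \<open>k \<le> n\<close> \<open>t \<le> n\<close> by (simp add: power_add[symmetric])
  next
    case False
    have "c * of_nat t = c * of_nat k"
      using trace \<open>mat_trace A = sum_list ds\<close> sum_list_two_values[OF roots] unfolding k_def by auto
    with False have "t = k" by simp
    with cp_k show ?thesis by simp
  qed
qed

lemma const_poly_sum: "(\<Sum>k\<in>S. [:f k:]) = [:\<Sum>k\<in>S. f k:]"
  by (induction S rule: infinite_finite_induct) auto

lemma char_poly_matrix_mult:
  fixes A B :: "'a::comm_ring_1 mat"
  assumes A: "A \<in> carrier_mat n n" and B: "B \<in> carrier_mat n n"
  shows "char_poly_matrix A * char_poly_matrix B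
    = mat n n (\<lambda>(i,j). [:(A * B) $$ (i,j), - (A + B) $$ (i,j), of_bool (i = j):])"
proof (rule eq_matI)
  fix i j assume "i < dim_row (mat n n (\<lambda>(i,j). [:(A * B) $$ (i,j), - (A + B) $$ (i,j), of_bool (i = j):]))"
    and "j < dim_col (mat n n (\<lambda>(i,j). [:(A * B) $$ (i,j), - (A + B) $$ (i,j), of_bool (i = j):]))"
  then have i: "i < n" and j: "j < n" by auto
  have entry: "char_poly_matrix M $$ (i,k) = (if i = k then [:0, 1:] else 0) - [:M $$ (i,k):]"
    if "M \<in> carrier_mat n n" "i < n" "k < n" for M i k
    using that by (simp add: char_poly_matrix_def)
  have "(char_poly_matrix A * char_poly_matrix B) $$ (i,j)
      = (\<Sum>k<n. ((if i = k then [:0, 1:] else 0) - [:A $$ (i,k):])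
                 * ((if k = j then [:0, 1:] else 0) - [:B $$ (k,j):]))"
    unfolding index_mult_mat_sum[OF char_poly_matrix_closed[OF A] char_poly_matrix_closed[OF B] i j]
    using A B i j by (intro sum.cong refl) (simp add: entry)
  also have "\<dots> = (\<Sum>k<n. (if k = i then (if i = j then [:0, 0, 1:] else 0) else 0)
      - (if k = i then [:0, B $$ (k,j):] else 0) - (if k = j then [:0, A $$ (i,k):] else 0)
      + [:A $$ (i,k) * B $$ (k,j):])"
    by (intro sum.cong) (auto simp: algebra_simps)
  also have "\<dots> = [:(A * B) $$ (i,j), - (A + B) $$ (i,j), of_bool (i = j):]"
    using A B i j
    by (simp add: sum.distrib sum_subtractf const_poly_sum index_mult_mat_sum[OF A B i j])
  finally show "(char_poly_matrix A * char_poly_matrix B) $$ (i,j)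
      = mat n n (\<lambda>(i,j). [:(A * B) $$ (i,j), - (A + B) $$ (i,j), of_bool (i = j):]) $$ (i,j)"
    using i j by simp
qed (use char_poly_matrix_closed[OF A] char_poly_matrix_closed[OF B] in auto)

lemma char_poly_mult_eq_if_sum_prod_eq:
  fixes A B C D :: "'a::comm_ring_1 mat"
  assumes "A \<in> carrier_mat n n" "B \<in> carrier_mat n n" "C \<in> carrier_mat n n" "D \<in> carrier_mat n n"
    and "A + B = C + D" and "A * B = C * D"
  shows "char_poly A * char_poly B = char_poly C * char_poly D"
proof -
  note closed = assms(1-4)[THEN char_poly_matrix_closed]
  have "char_poly A * char_poly B = det (char_poly_matrix A * char_poly_matrix B)"
    unfolding char_poly_def by (simp add: det_mult[OF closed(1,2)])
  also have "char_poly_matrix A * char_poly_matrix B = char_poly_matrix C * char_poly_matrix D"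
    using assms by (simp add: char_poly_matrix_mult)
  also have "det \<dots> = char_poly C * char_poly D"
    unfolding char_poly_def by (simp add: det_mult[OF closed(3,4)])
  finally show ?thesis .
qed

lemma char_poly_smult_one: "char_poly (a \<cdot>\<^sub>m 1\<^sub>m n) = [:-a, 1:] ^ n"
proof -
  have "upper_triangular (a \<cdot>\<^sub>m 1\<^sub>m n)" unfolding upper_triangular_def by auto
  moreover have "diag_mat (a \<cdot>\<^sub>m 1\<^sub>m n) = replicate n a"
    unfolding diag_mat_def by (auto intro: nth_equalityI)
  ultimately show ?thesis
    using char_poly_upper_triangular[of "a \<cdot>\<^sub>m 1\<^sub>m n" n] by (simp add: prod_list_replicate)
qed

lemma poly_char_poly_0_eq_0_iff:
  fixes A :: "'a::field mat"
  assumes A: "A \<in> carrier_mat n n"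
  shows "poly (char_poly A) 0 = 0 \<longleftrightarrow> det A = 0"
proof -
  have zero_smult: "0 \<cdot>\<^sub>v v = 0\<^sub>v n" if "v \<in> carrier_vec n" for v :: "'a vec"
    using that by (intro eq_vecI) auto
  have "poly (char_poly A) 0 = 0 \<longleftrightarrow> (\<exists>v. v \<in> carrier_vec n \<and> v \<noteq> 0\<^sub>v n \<and> A *\<^sub>v v = 0\<^sub>v n)"
    unfolding eigenvalue_root_char_poly[OF A, symmetric] eigenvalue_def eigenvector_def
    using A by (auto simp: zero_smult)
  also have "\<dots> \<longleftrightarrow> det A = 0"
    using det_0_iff_vec_prod_zero[OF A] by simp
  finally show ?thesis .
qed

lemma idempotent_and_det_add_nonzero:
  fixes L Z M :: "'a::field mat"
  assumes L: "L \<in> carrier_mat n n" and Z: "Z \<in> carrier_mat n n" and M: "M \<in> carrier_mat n n"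
    and ZL: "Z * L = 0\<^sub>m n n" and one_minus: "1\<^sub>m n - Z = L * M" and comm: "L * M = M * L"
  shows "Z * Z = Z" and "det (L + Z) \<noteq> 0"
proof -
  have "Z - Z * Z = Z * (1\<^sub>m n - Z)"
    using Z by (simp add: mult_minus_distrib_mat[OF Z one_carrier_mat Z])
  also have "\<dots> = 0\<^sub>m n n"
    using L M by (simp add: one_minus assoc_mult_mat[OF Z L M, symmetric] ZL)
  finally have diff: "Z - Z * Z = 0\<^sub>m n n" .
  show ZZ: "Z * Z = Z"
  proof (rule eq_matI)
    fix i j assume "i < dim_row Z" and "j < dim_col Z"
    moreover from this have "(Z - Z * Z) $$ (i,j) = 0" using Z by (simp add: diff)
    ultimately show "(Z * Z) $$ (i,j) = Z $$ (i,j)" using Z by simp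
  qed (use Z in auto)
  show "det (L + Z) \<noteq> 0"
  proof
    assume "det (L + Z) = 0"
    then obtain v where v: "v \<in> carrier_vec n" and nonzero: "v \<noteq> 0\<^sub>v n" and kernel: "(L + Z) *\<^sub>v v = 0\<^sub>v n"
      using det_0_iff_vec_prod_zero[of "L + Z" n] L Z by auto
    have "Z * (L + Z) = Z"
      using L Z by (simp add: mult_add_distrib_mat[OF Z L Z] ZL ZZ)
    then have "Z *\<^sub>v v = Z *\<^sub>v ((L + Z) *\<^sub>v v)"
      using L Z v by (metis add_carrier_mat assoc_mult_mat_vec)
    then have Zv: "Z *\<^sub>v v = 0\<^sub>v n"
      using Z by (simp add: kernel mult_mat_vec_zero)
    then have Lv: "L *\<^sub>v v = 0\<^sub>v n"
      using L Z v kernel by (simp add: add_mult_distrib_mat_vec[OF L Z v])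
    have "v = (1\<^sub>m n - Z) *\<^sub>v v + Z *\<^sub>v v"
      unfolding minus_mult_distrib_mat_vec[OF one_carrier_mat Z v] using Z v by (intro eq_vecI) auto
    also have "\<dots> = 0\<^sub>v n"
      using L M v by (simp add: one_minus comm Zv Lv assoc_mult_mat_vec[OF M L v] mult_mat_vec_zero)
    finally show False using nonzero by simp
  qed
qed

lemma char_poly_add_smult_idempotent:
  fixes L Z :: "complex mat"
  assumes L: "L \<in> carrier_mat n n" and Z: "Z \<in> carrier_mat n n"
    and LZ: "L * Z = 0\<^sub>m n n" and ZZ: "Z * Z = Z" and trace: "mat_trace Z = of_nat d" and "d \<le> n"
  shows "char_poly (L + a \<cdot>\<^sub>m Z) * [:0, 1:] ^ d = char_poly L * [:-a, 1:] ^ d"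
proof -
  define P where "P = 1\<^sub>m n - Z"
  have P: "P \<in> carrier_mat n n" unfolding P_def using Z by (simp add: minus_carrier_mat)
  have LP: "L * P = L"
  proof -
    have "L * P = L * 1\<^sub>m n - L * Z"
      unfolding P_def by (rule mult_minus_distrib_mat[OF L one_carrier_mat Z])
    also have "\<dots> = L" using L by (intro eq_matI) (auto simp: LZ)
    finally show ?thesis .
  qed
  have ZP: "Z * P = 0\<^sub>m n n"
    unfolding P_def mult_minus_distrib_mat[OF Z one_carrier_mat Z] ZZ using Z by simp
  have PP: "P * P = P"
  proof -
    have "P * P = 1\<^sub>m n * P - Z * P"
      by (subst (1) P_def) (rule minus_mult_distrib_mat[OF one_carrier_mat Z P])
    also have "\<dots> = P" using P by (intro eq_matI) (auto simp: ZP)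
    finally show ?thesis .
  qed
  define A where "A = L + a \<cdot>\<^sub>m Z"
  define B where "B = a \<cdot>\<^sub>m P"
  have A: "A \<in> carrier_mat n n" and B: "B \<in> carrier_mat n n"
    unfolding A_def B_def using L Z P by auto
  have "A + B = L + a \<cdot>\<^sub>m 1\<^sub>m n"
    unfolding A_def B_def P_def using L Z by (intro eq_matI) (auto simp: algebra_simps)
  moreover have "A * B = L * (a \<cdot>\<^sub>m 1\<^sub>m n)"
  proof -
    have "A * B = a \<cdot>\<^sub>m (L * P + (a \<cdot>\<^sub>m Z) * P)"
      unfolding B_def mult_smult_distrib[OF A P] unfolding A_def
      using add_mult_distrib_mat[OF L _ P] Z by simp
    also have "\<dots> = a \<cdot>\<^sub>m L"
      using L Z P by (simp add: LP mult_smult_assoc_mat ZP)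
    also have "\<dots> = L * (a \<cdot>\<^sub>m 1\<^sub>m n)"
      using L by (simp add: mult_smult_distrib[OF L one_carrier_mat])
    finally show ?thesis .
  qed
  ultimately have "char_poly A * char_poly B = char_poly L * [:-a, 1:] ^ n"
    using char_poly_mult_eq_if_sum_prod_eq[OF A B L smult_carrier_mat[OF one_carrier_mat]]
    by (simp add: char_poly_smult_one)
  moreover have "char_poly B = [:-a, 1:] ^ (n - d) * [:0, 1:] ^ d"
  proof -
    have "B * B = a \<cdot>\<^sub>m B"
      unfolding B_def mult_smult_distrib[OF smult_carrier_mat[OF P] P]
      by (simp add: mult_smult_assoc_mat[OF P P] PP)
    moreover have "mat_trace B = a * of_nat (n - d)"
      using Z trace \<open>d \<le> n\<close>
      by (simp add: B_def P_def mat_trace_def sum_subtractf sum_distrib_left[symmetric] of_nat_diff)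
    ultimately have "char_poly B = [:-a, 1:] ^ (n - d) * [:0, 1:] ^ (n - (n - d))"
      by (intro char_poly_mult_self_eq_smult[OF B]) auto
    with \<open>d \<le> n\<close> show ?thesis by simp
  qed
  ultimately have "(char_poly A * [:0, 1:] ^ d) * [:-a, 1:] ^ (n - d)
      = (char_poly L * [:-a, 1:] ^ d) * [:-a, 1:] ^ (n - d)"
    using \<open>d \<le> n\<close> by (simp add: algebra_simps power_add[symmetric])
  then show ?thesis unfolding A_def by simp
qed

lemma char_poly_add_smult_idempotent_factor:
  fixes L Z :: "complex mat"
  assumes L: "L \<in> carrier_mat n n" and Z: "Z \<in> carrier_mat n n"
    and LZ: "L * Z = 0\<^sub>m n n" and ZZ: "Z * Z = Z" and trace: "mat_trace Z = of_nat d" and "d \<le> n"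
    and nonsingular: "det (L + Z) \<noteq> 0"
  shows "(\<exists>q. char_poly L = monom 1 d * q \<and> poly q 0 \<noteq> 0
            \<and> char_poly (L + \<alpha> \<cdot>\<^sub>m Z) = [:-\<alpha>, 1:] ^ d * q)
      \<and> (\<alpha> \<noteq> 0 \<longrightarrow> det (L + \<alpha> \<cdot>\<^sub>m Z) \<noteq> 0)"
proof -
  note shift = char_poly_add_smult_idempotent[OF L Z LZ ZZ trace \<open>d \<le> n\<close>]
  \<comment> \<open>At \<open>a = 1\<close> the factor \<open>\<chi>\<^sub>L\<^sub>+\<^sub>Z\<close> does not vanish at 0, which pins down the multiplicity of 0 in \<open>\<chi>\<^sub>L\<close>.\<close>
  have "poly (char_poly (L + Z)) 0 \<noteq> 0"
    using poly_char_poly_0_eq_0_iff[of "L + Z" n] L Z nonsingular by simp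
  then have "char_poly (L + Z) \<noteq> 0" and "Polynomial.order 0 (char_poly (L + Z)) = 0"
    by (auto simp: order_0I)
  then have "Polynomial.order 0 (char_poly (L + Z) * [:0, 1:] ^ d) = d"
    using order_mult[of "char_poly (L + Z)" "[:0, 1:] ^ d" 0] order_power_n_n[of 0 d] by simp
  moreover have one: "char_poly (L + Z) * [:0, 1:] ^ d = char_poly L * [:-1, 1:] ^ d"
    using shift[of 1] Z by (simp add: one_smult_mat)
  moreover have "Polynomial.order 0 ([:-1, 1:] ^ d :: complex poly) = 0"
    by (simp add: order_0I)
  moreover have "char_poly L * [:-1, 1:] ^ d \<noteq> 0"
    using \<open>char_poly (L + Z) \<noteq> 0\<close> unfolding one[symmetric] by simp
  ultimately have "Polynomial.order 0 (char_poly L) = d" and "char_poly L \<noteq> 0"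
    using order_mult[of "char_poly L" "[:-1, 1:] ^ d" 0] by auto
  then obtain q where q: "char_poly L = [:0, 1:] ^ d * q" and "\<not> [:0, 1:] dvd q"
    using order_decomp[of "char_poly L" 0] by auto
  then have "poly q 0 \<noteq> 0" by (simp add: poly_eq_0_iff_dvd)
  have "char_poly (L + \<alpha> \<cdot>\<^sub>m Z) = [:-\<alpha>, 1:] ^ d * q"
    using shift[of \<alpha>] unfolding q by (simp add: ac_simps)
  moreover have "det (L + \<alpha> \<cdot>\<^sub>m Z) \<noteq> 0" if "\<alpha> \<noteq> 0"
    using poly_char_poly_0_eq_0_iff[of "L + \<alpha> \<cdot>\<^sub>m Z" n] L Z that \<open>poly q 0 \<noteq> 0\<close>
    by (simp add: calculation)
  ultimately show ?thesis
    using q \<open>poly q 0 \<noteq> 0\<close> by (auto simp: monom_altdef)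
qed

lemma char_poly_add_smult_idempotent_factor_of_real:
  fixes L Z :: "real mat"
  assumes L: "L \<in> carrier_mat n n" and Z: "Z \<in> carrier_mat n n"
    and LZ: "L * Z = 0\<^sub>m n n" and ZZ: "Z * Z = Z" and trace: "mat_trace Z = of_nat d" and "d \<le> n"
    and nonsingular: "det (L + Z) \<noteq> 0"
  shows "(\<exists>q. char_poly (cmat L) = monom 1 d * q \<and> poly q 0 \<noteq> 0
            \<and> char_poly (cmat L + \<alpha> \<cdot>\<^sub>m cmat Z) = [:-\<alpha>, 1:] ^ d * q)
      \<and> (\<alpha> \<noteq> 0 \<longrightarrow> det (cmat L + \<alpha> \<cdot>\<^sub>m cmat Z) \<noteq> 0)"
proof (rule char_poly_add_smult_idempotent_factor)
  show "cmat L \<in> carrier_mat n n" and "cmat Z \<in> carrier_mat n n"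
    using L Z by auto
  show "cmat L * cmat Z = 0\<^sub>m n n"
    unfolding of_real_hom.mat_hom_mult[OF L Z, symmetric] LZ by auto
  show "cmat Z * cmat Z = cmat Z"
    unfolding of_real_hom.mat_hom_mult[OF Z Z, symmetric] ZZ ..
  show "mat_trace (cmat Z) = of_nat d"
    using Z trace by (simp add: mat_trace_def flip: of_real_sum)
  have "cmat L + cmat Z = cmat (L + Z)"
    using L Z by (intro eq_matI) auto
  then show "det (cmat L + cmat Z) \<noteq> 0"
    using nonsingular by simp
qed (rule \<open>d \<le> n\<close>)

section \<open>In-forests\<close>

definition sink :: "(nat \<times> nat) set \<Rightarrow> nat \<Rightarrow> bool" where
  "sink F r \<longleftrightarrow> (\<forall>j. (r,j) \<notin> F)"

definition root_of :: "(nat \<times> nat) set \<Rightarrow> nat \<Rightarrow> nat \<Rightarrow> bool" where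
  "root_of F v r \<longleftrightarrow> (v,r) \<in> F\<^sup>* \<and> sink F r"

lemma arcs_subset: "arcs W n \<subseteq> {..<n} \<times> {..<n}"
  unfolding arcs_def by auto

lemma finite_arcs: "finite (arcs W n)"
  using arcs_subset by (rule finite_subset) auto

lemma root_of_step:
  assumes "single_valued F" and "(x,y) \<in> F"
  shows "root_of F x r \<longleftrightarrow> root_of F y r"
proof
  assume "root_of F x r"
  then have "(x,r) \<in> F\<^sup>*" and "sink F r" unfolding root_of_def by auto
  then show "root_of F y r"
    using assms unfolding root_of_def sink_def
    by (cases rule: converse_rtranclE) (auto dest: single_valuedD)
next
  assume "root_of F y r"
  then show "root_of F x r"
    using assms(2) unfolding root_of_def by (blast intro: converse_rtrancl_into_rtrancl)
qed

lemma root_of_connected: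
  assumes "single_valued F" and "(x,y) \<in> (F \<union> F\<inverse>)\<^sup>*"
  shows "root_of F x r \<longleftrightarrow> root_of F y r"
  using assms(2)
proof (induction rule: rtrancl_induct)
  case (step y z)
  then show ?case
    using root_of_step[OF assms(1), of y z r] root_of_step[OF assms(1), of z y r] by blast
qed simp

lemma root_of_sink:
  assumes "sink F i"
  shows "root_of F i j \<longleftrightarrow> j = i"
proof
  assume "root_of F i j"
  then have "(i,j) \<in> F\<^sup>*" unfolding root_of_def by simp
  then show "j = i"
    using assms unfolding sink_def by (cases rule: converse_rtranclE) auto
qed (use assms in \<open>simp add: root_of_def\<close>)

lemma root_of_unique:
  assumes "single_valued F" and "root_of F v a" and "root_of F v b"
  shows "a = b"
proof -
  have "(v,a) \<in> F\<^sup>*" using assms(2) unfolding root_of_def by simp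
  then show ?thesis
    using assms(2,3)
  proof (induction rule: converse_rtrancl_induct)
    case base
    then show ?case using root_of_sink[of F a b] unfolding root_of_def by simp
  next
    case (step v u)
    then show ?case using root_of_step[OF assms(1) step(1)] by blast
  qed
qed

lemma single_valued_iff_outdeg_le_1:
  assumes "finite F"
  shows "single_valued F \<longleftrightarrow> (\<forall>i. outdeg F i \<le> 1)"
proof -
  have "finite {j. (i,j) \<in> F}" for i
    using assms by (rule finite_subset[rotated, OF finite_imageI[of _ snd]]) force
  then show ?thesis
    unfolding single_valued_def outdeg_def by (auto simp: card_le_Suc0_iff_eq)
qed

lemma outdeg_eq_0_iff_sink:
  assumes "finite F"
  shows "outdeg F r = 0 \<longleftrightarrow> sink F r"
proof -
  have "finite {j. (r,j) \<in> F}"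
    using assms by (rule finite_subset[rotated, OF finite_imageI[of _ snd]]) force
  then show ?thesis unfolding outdeg_def sink_def by auto
qed

lemma root_of_less:
  assumes "F \<subseteq> arcs W n" and "root_of F v r" and "v < n"
  shows "r < n"
proof -
  have "(v,r) \<in> F\<^sup>*" using assms(2) unfolding root_of_def by simp
  then show ?thesis
    using assms(1,3) arcs_subset[of W n] by (cases rule: rtranclE) auto
qed

lemma root_of_in_weak_comp:
  assumes "F \<subseteq> arcs W n" and "root_of F v r" and "v < n"
  shows "r \<in> weak_comp F n v"
proof -
  have "(v,r) \<in> F\<^sup>*" using assms(2) unfolding root_of_def by simp
  then have "(v,r) \<in> (F \<union> F\<inverse>)\<^sup>*" by (rule rtrancl_mono[THEN subsetD, rotated]) auto
  then show ?thesis using root_of_less[OF assms] unfolding weak_comp_def by simp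
qed

lemma root_of_iff_weak_comp_sink:
  assumes "F \<subseteq> arcs W n" and "single_valued F" and "v < n"
  shows "root_of F v j \<longleftrightarrow> j \<in> weak_comp F n v \<and> sink F j"
proof
  assume "j \<in> weak_comp F n v \<and> sink F j"
  then have "(v,j) \<in> (F \<union> F\<inverse>)\<^sup>*" and "root_of F j j"
    unfolding weak_comp_def root_of_def by auto
  then show "root_of F v j" using root_of_connected[OF assms(2)] by blast
qed (use root_of_in_weak_comp[OF assms(1) _ assms(3)] in \<open>auto simp: root_of_def\<close>)

lemma is_in_forest_iff:
  "is_in_forest W n F \<longleftrightarrow> F \<subseteq> arcs W n \<and> single_valued F \<and> (\<forall>v. \<exists>r. root_of F v r)"
proof (cases "F \<subseteq> arcs W n")
  case True
  then have "finite F" using finite_arcs by (rule finite_subset)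
  have outside: "sink F v" if "\<not> v < n" for v
    using True arcs_subset that unfolding sink_def by blast
  have "(\<forall>i<n. outdeg F i \<le> 1) \<longleftrightarrow> (\<forall>i. outdeg F i \<le> 1)"
    using outside outdeg_eq_0_iff_sink[OF \<open>finite F\<close>] by (metis le_zero_eq zero_le_one)
  then have "(\<forall>i<n. outdeg F i \<le> 1) \<longleftrightarrow> single_valued F"
    by (simp add: single_valued_iff_outdeg_le_1[OF \<open>finite F\<close>])
  moreover have "(\<forall>v<n. \<exists>!r. r \<in> weak_comp F n v \<and> outdeg F r = 0) \<longleftrightarrow> (\<forall>v. \<exists>r. root_of F v r)"
    if "single_valued F"
  proof -
    have "(\<forall>v<n. \<exists>!r. r \<in> weak_comp F n v \<and> outdeg F r = 0) \<longleftrightarrow> (\<forall>v<n. \<exists>!r. root_of F v r)"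
      using root_of_iff_weak_comp_sink[OF True that] outdeg_eq_0_iff_sink[OF \<open>finite F\<close>] by simp
    also have "\<dots> \<longleftrightarrow> (\<forall>v<n. \<exists>r. root_of F v r)"
      using root_of_unique[OF that] by blast
    also have "\<dots> \<longleftrightarrow> (\<forall>v. \<exists>r. root_of F v r)"
      using outside root_of_sink by blast
    finally show ?thesis .
  qed
  ultimately show ?thesis
    unfolding is_in_forest_def using True by blast
qed (simp add: is_in_forest_def)

lemma num_trees_eq_card_sinks:
  assumes "is_in_forest W n F"
  shows "num_trees F n = card {r. r < n \<and> sink F r}"
proof -
  have sub: "F \<subseteq> arcs W n" and sv: "single_valued F" and roots: "\<And>v. \<exists>r. root_of F v r"
    using assms unfolding is_in_forest_iff by auto
  define R where "R = {r. r < n \<and> sink F r}"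
  have same_comp: "weak_comp F n v = weak_comp F n r" if "(v,r) \<in> (F \<union> F\<inverse>)\<^sup>*" for v r
  proof -
    have "(r,v) \<in> (F \<union> F\<inverse>)\<^sup>*"
      using that by (rule symD[OF sym_rtrancl[OF sym_Un_converse]])
    with that show ?thesis unfolding weak_comp_def by (auto intro: rtrancl_trans)
  qed
  have "weak_comp F n ` {..<n} = weak_comp F n ` R"
  proof
    show "weak_comp F n ` {..<n} \<subseteq> weak_comp F n ` R"
    proof
      fix C assume "C \<in> weak_comp F n ` {..<n}"
      then obtain v where "v < n" and C: "C = weak_comp F n v" by auto
      obtain r where "root_of F v r" using roots by blast
      then have "r \<in> R" and "r \<in> weak_comp F n v"
        using root_of_less[OF sub] root_of_in_weak_comp[OF sub] \<open>v < n\<close>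
        unfolding R_def root_of_def by auto
      then show "C \<in> weak_comp F n ` R"
        using C same_comp unfolding weak_comp_def by auto
    qed
  qed (auto simp: R_def)
  moreover have "inj_on (weak_comp F n) R"
  proof
    fix r1 r2 assume r1: "r1 \<in> R" and r2: "r2 \<in> R" and "weak_comp F n r1 = weak_comp F n r2"
    then have "r1 \<in> weak_comp F n r2" unfolding R_def weak_comp_def by auto
    then have "root_of F r2 r1"
      using root_of_iff_weak_comp_sink[OF sub sv] r1 r2 unfolding R_def by auto
    then show "r1 = r2" using root_of_sink r2 unfolding R_def by auto
  qed
  ultimately show ?thesis
    unfolding num_trees_def R_def[symmetric] by (simp add: card_image)
qed

lemma card_add_num_trees:
  assumes "is_in_forest W n F"
  shows "card F + num_trees F n = n"
proof -
  have sub: "F \<subseteq> arcs W n" and sv: "single_valued F"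
    using assms unfolding is_in_forest_iff by auto
  have "fst ` F = {r. r < n \<and> \<not> sink F r}"
    using sub arcs_subset unfolding sink_def by force
  moreover have "inj_on fst F"
    using sv unfolding single_valued_def inj_on_def by auto
  ultimately have "card F = card {r. r < n \<and> \<not> sink F r}"
    by (metis card_image)
  moreover have "card {r. r < n \<and> \<not> sink F r} + card {r. r < n \<and> sink F r} = n"
  proof -
    have "{r. r < n \<and> \<not> sink F r} \<union> {r. r < n \<and> sink F r} = {..<n}" by auto
    moreover have "card ({r. r < n \<and> \<not> sink F r} \<union> {r. r < n \<and> sink F r})
        = card {r. r < n \<and> \<not> sink F r} + card {r. r < n \<and> sink F r}"
      by (rule card_Un_disjoint) auto
    ultimately show ?thesis by simp
  qed
  ultimately show ?thesis
    using num_trees_eq_card_sinks[OF assms] by simp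
qed

lemma root_of_insert_arc_if:
  assumes "sink H i" and "(l,i) \<notin> H\<^sup>*"
    and "if (v,i) \<in> H\<^sup>* then root_of H l j else root_of H v j"
  shows "root_of (insert (i,l) H) v j"
proof -
  let ?G = "insert (i,l) H"
  have mono: "(x,y) \<in> ?G\<^sup>*" if "(x,y) \<in> H\<^sup>*" for x y
    using that by (rule rtrancl_mono[THEN subsetD, rotated]) auto
  have sink_G: "sink ?G r" if "root_of H x r" and "(x,i) \<notin> H\<^sup>*" for x r
  proof -
    have "r \<noteq> i" using that unfolding root_of_def by auto
    with that show ?thesis unfolding root_of_def sink_def by auto
  qed
  show ?thesis
  proof (cases "(v,i) \<in> H\<^sup>*")
    case True
    then have "root_of H l j" using assms(3) by simp
    moreover have "(v,l) \<in> ?G\<^sup>*"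
      using mono[OF True] by (rule rtrancl_into_rtrancl) simp
    ultimately show ?thesis
      using sink_G[OF _ assms(2)] mono unfolding root_of_def by (blast intro: rtrancl_trans)
  next
    case False
    then show ?thesis
      using assms(3) sink_G[OF _ False] mono unfolding root_of_def by auto
  qed
qed

lemma is_in_forest_insert_arc:
  assumes "is_in_forest W n H" and "sink H i" and "(i,l) \<in> arcs W n" and "(l,i) \<notin> H\<^sup>*"
  shows "is_in_forest W n (insert (i,l) H)"
proof -
  have "H \<subseteq> arcs W n" and sv: "single_valued H" and roots: "\<And>v. \<exists>r. root_of H v r"
    using assms(1) unfolding is_in_forest_iff by auto
  moreover have "single_valued (insert (i,l) H)"
    using sv assms(2) unfolding single_valued_def sink_def by auto
  moreover have "\<exists>r. root_of (insert (i,l) H) v r" for v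
    using roots root_of_insert_arc_if[OF assms(2,4)] by meson
  ultimately show ?thesis
    using assms(3) unfolding is_in_forest_iff by auto
qed

lemma root_of_insert_arc:
  assumes "is_in_forest W n H" and "sink H i" and "(i,l) \<in> arcs W n" and "(l,i) \<notin> H\<^sup>*"
  shows "root_of (insert (i,l) H) v j \<longleftrightarrow> (if (v,i) \<in> H\<^sup>* then root_of H l j else root_of H v j)"
proof -
  have "single_valued (insert (i,l) H)"
    using is_in_forest_insert_arc[OF assms] unfolding is_in_forest_iff by simp
  moreover obtain r where r: "if (v,i) \<in> H\<^sup>* then root_of H l r else root_of H v r"
    using assms(1) unfolding is_in_forest_iff by (cases "(v,i) \<in> H\<^sup>*") auto
  ultimately have "root_of (insert (i,l) H) v j \<longleftrightarrow> j = r"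
    using root_of_insert_arc_if[OF assms(2,4) r] root_of_unique by blast
  then show ?thesis
    using r root_of_insert_arc_if[OF assms(2,4)] by auto
qed

lemma is_in_forest_subset:
  assumes "is_in_forest W n G" and "H \<subseteq> G"
  shows "is_in_forest W n H"
proof -
  have sv: "single_valued H" and "H \<subseteq> arcs W n"
    using assms single_valued_subset unfolding is_in_forest_iff by blast+
  moreover have "\<exists>r. root_of H v r" for v
  proof -
    have "single_valued G" and "\<exists>r. root_of G v r"
      using assms(1) unfolding is_in_forest_iff by auto
    then obtain r where "(v,r) \<in> G\<^sup>*" and "sink G r"
      unfolding root_of_def by blast
    then show ?thesis
    proof (induction rule: converse_rtrancl_induct)
      case base
      then have "sink H r" using assms(2) unfolding sink_def by blast
      then show ?case using root_of_sink by blast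
    next
      case (step v u)
      show ?case
      proof (cases "(v,u) \<in> H")
        case True
        then show ?thesis using step root_of_step[OF sv] by blast
      next
        case False
        then have "sink H v"
          using step(1) \<open>single_valued G\<close> assms(2) unfolding sink_def single_valued_def by blast
        then show ?thesis using root_of_sink by blast
      qed
    qed
  qed
  ultimately show ?thesis unfolding is_in_forest_iff by blast
qed

lemma in_forest_no_cycle:
  assumes "is_in_forest W n G"
  shows "(a,a) \<notin> G\<^sup>+"
proof
  assume cycle: "(a,a) \<in> G\<^sup>+"
  have sv: "single_valued G" and "\<exists>r. root_of G a r"
    using assms unfolding is_in_forest_iff by auto
  then obtain r where "(a,r) \<in> G\<^sup>*" and "sink G r" unfolding root_of_def by blast
  have "(u,a) \<in> G\<^sup>+" if "(a,u) \<in> G\<^sup>*" for u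
    using that
  proof (induction rule: rtrancl_induct)
    case (step u u')
    obtain s where "(u,s) \<in> G" and "(s,a) \<in> G\<^sup>*" using tranclD[OF step(3)] by blast
    then have "(u',a) \<in> G\<^sup>*" using sv step(2) by (auto dest: single_valuedD)
    then show ?case using cycle by (auto intro: rtrancl_into_trancl1 dest: rtranclD)
  qed (rule cycle)
  then have "(r,a) \<in> G\<^sup>+" using \<open>(a,r) \<in> G\<^sup>*\<close> by blast
  with \<open>sink G r\<close> show False unfolding sink_def by (auto dest: tranclD)
qed

definition forests :: "real mat \<Rightarrow> nat \<Rightarrow> nat \<Rightarrow> (nat \<times> nat) set set" where
  "forests W n k = {F. is_in_forest W n F \<and> card F = k}"

definition attachable :: "real mat \<Rightarrow> nat \<Rightarrow> (nat \<times> nat) set \<Rightarrow> nat \<Rightarrow> nat set" where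
  "attachable W n H i = {l. (i,l) \<in> arcs W n \<and> (l,i) \<notin> H\<^sup>*}"

lemma finite_forests: "finite (forests W n k)"
proof -
  have "forests W n k \<subseteq> Pow (arcs W n)"
    unfolding forests_def is_in_forest_def by auto
  then show ?thesis using finite_arcs by (simp add: finite_subset)
qed

lemma finite_attachable: "finite (attachable W n H i)"
proof -
  have "attachable W n H i \<subseteq> snd ` arcs W n" unfolding attachable_def by force
  then show ?thesis using finite_arcs by (simp add: finite_subset)
qed

lemma forestsD:
  assumes "F \<in> forests W n k"
  shows "is_in_forest W n F" and "finite F" and "card F = k"
  using assms finite_subset[OF _ finite_arcs] unfolding forests_def is_in_forest_def by auto

lemma sum_forests_Suc_not_sink:
  "(\<Sum>G\<in>{G \<in> forests W n (Suc k). \<not> sink G i}. f G)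
    = (\<Sum>H\<in>{H \<in> forests W n k. sink H i}. \<Sum>l\<in>attachable W n H i. f (insert (i,l) H))"
proof -
  define S where "S = Sigma {H \<in> forests W n k. sink H i} (\<lambda>H. attachable W n H i)"
  define h where "h = (\<lambda>(H, l::nat). insert (i,l) H)"
  have "inj_on h S"
  proof (rule inj_onI, clarify)
    fix H l H' l'
    assume "(H,l) \<in> S" "(H',l') \<in> S" and eq: "h (H,l) = h (H',l')"
    then have "sink H i" "sink H' i" unfolding S_def by auto
    moreover have "(i,l) \<in> insert (i,l') H'" using eq unfolding h_def by auto
    ultimately have "l = l'" and "(i,l) \<notin> H" and "(i,l) \<notin> H'"
      unfolding sink_def by auto
    then show "H = H' \<and> l = l'" using eq unfolding h_def by (simp add: insert_ident)
  qed
  moreover have "h ` S = {G \<in> forests W n (Suc k). \<not> sink G i}"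
  proof (intro equalityI subsetI)
    fix G assume "G \<in> h ` S"
    then obtain H l where H: "H \<in> forests W n k" "sink H i" and l: "l \<in> attachable W n H i"
      and G: "G = insert (i,l) H"
      unfolding S_def h_def by auto
    have "is_in_forest W n G"
      unfolding G using l forestsD(1)[OF H(1)] H(2)
      by (intro is_in_forest_insert_arc) (auto simp: attachable_def)
    moreover have "(i,l) \<notin> H" using H(2) unfolding sink_def by auto
    then have "card G = Suc k" using forestsD[OF H(1)] unfolding G by simp
    ultimately show "G \<in> {G \<in> forests W n (Suc k). \<not> sink G i}"
      unfolding forests_def G sink_def by auto
  next
    fix G assume "G \<in> {G \<in> forests W n (Suc k). \<not> sink G i}"
    then have G: "G \<in> forests W n (Suc k)" and "\<not> sink G i" by auto
    then obtain l where il: "(i,l) \<in> G" unfolding sink_def by auto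
    note G_forest = forestsD[OF G]
    define H where "H = G - {(i,l)}"
    have "H \<in> forests W n k"
      using is_in_forest_subset[OF G_forest(1)] G_forest il unfolding H_def forests_def by auto
    moreover have "sink H i"
      using G_forest(1) il unfolding H_def is_in_forest_iff sink_def by (auto dest: single_valuedD)
    moreover have "(l,i) \<notin> H\<^sup>*"
    proof
      assume "(l,i) \<in> H\<^sup>*"
      then have "(l,i) \<in> G\<^sup>*" unfolding H_def by (rule rtrancl_mono[THEN subsetD, rotated]) auto
      with il have "(i,i) \<in> G\<^sup>+" by (rule rtrancl_into_trancl2)
      with in_forest_no_cycle[OF G_forest(1)] show False by blast
    qed
    moreover have "(i,l) \<in> arcs W n" using G_forest(1) il unfolding is_in_forest_def by auto
    ultimately have "(H, l) \<in> S" unfolding S_def attachable_def by simp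
    moreover have "G = h (H, l)" unfolding h_def H_def using il by auto
    ultimately show "G \<in> h ` S" by blast
  qed
  ultimately have "(\<Sum>G\<in>{G \<in> forests W n (Suc k). \<not> sink G i}. f G) = (\<Sum>x\<in>S. f (h x))"
    using sum.reindex[of h S f] by (simp add: comp_def)
  also have "\<dots> = (\<Sum>H\<in>{H \<in> forests W n k. sink H i}. \<Sum>l\<in>attachable W n H i. f (insert (i,l) H))"
    unfolding S_def h_def using finite_forests finite_attachable
    by (subst sum.Sigma) (auto simp: case_prod_beta)
  finally show ?thesis .
qed

section \<open>The matrix-forest recurrence\<close>

lemma laplacian_carrier: "laplacian W n \<in> carrier_mat n n"
  unfolding laplacian_def by simp

lemma Qmat_carrier: "Qmat W n k \<in> carrier_mat n n"
  unfolding Qmat_def by simp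

lemma Jtilde_carrier: "Jtilde W n \<in> carrier_mat n n"
  unfolding Jtilde_def Let_def using Qmat_carrier by simp

lemma Qmat_index:
  assumes "i < n" and "j < n"
  shows "Qmat W n k $$ (i,j) = (\<Sum>F\<in>forests W n k. fweight W F * of_bool (root_of F i j))"
proof -
  have "j \<in> weak_comp F n i \<and> outdeg F j = 0 \<longleftrightarrow> root_of F i j" if "F \<in> forests W n k" for F
    using forestsD[OF that] root_of_iff_weak_comp_sink[of F W n i j] assms(1)
      outdeg_eq_0_iff_sink[of F j]
    unfolding is_in_forest_iff by blast
  then have "{F. is_in_forest W n F \<and> card F = k \<and> j \<in> weak_comp F n i \<and> outdeg F j = 0}
      = {F \<in> forests W n k. root_of F i j}"
    unfolding forests_def by blast
  then have "Qmat W n k $$ (i,j) = (\<Sum>F\<in>{F \<in> forests W n k. root_of F i j}. fweight W F)"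
    using assms by (simp add: Qmat_def)
  also have "\<dots> = (\<Sum>F\<in>forests W n k. fweight W F * of_bool (root_of F i j))"
    unfolding sum.inter_filter[OF finite_forests] by (intro sum.cong) auto
  finally show ?thesis .
qed

lemma sigma_eq_sum_forests: "sigma W n k = (\<Sum>F\<in>forests W n k. fweight W F)"
  unfolding sigma_def forests_def ..

lemma fweight_insert:
  assumes "finite H" and "(i,l) \<notin> H"
  shows "fweight W (insert (i,l) H) = W $$ (i,l) * fweight W H"
  using assms unfolding fweight_def by simp

lemma fweight_pos:
  assumes "is_in_forest W n F"
  shows "fweight W F > 0"
  using assms unfolding fweight_def is_in_forest_def arcs_def by (intro prod_pos) auto

lemma laplacian_row_sum:
  assumes "i < n"
  shows "(\<Sum>l<n. laplacian W n $$ (i,l) * x l) = (\<Sum>l\<in>{..<n} - {i}. W $$ (i,l) * (x i - x l))"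
proof -
  have "(\<Sum>l<n. laplacian W n $$ (i,l) * x l)
      = laplacian W n $$ (i,i) * x i + (\<Sum>l\<in>{..<n} - {i}. laplacian W n $$ (i,l) * x l)"
    using assms by (subst sum.remove[of _ i]) auto
  also have "\<dots> = (\<Sum>l\<in>{..<n} - {i}. W $$ (i,l)) * x i - (\<Sum>l\<in>{..<n} - {i}. W $$ (i,l) * x l)"
    using assms by (simp add: laplacian_def sum_negf)
  also have "\<dots> = (\<Sum>l\<in>{..<n} - {i}. W $$ (i,l) * (x i - x l))"
    by (simp add: sum_distrib_right sum_subtractf right_diff_distrib)
  finally show ?thesis .
qed

definition laplacian_root_indicator :: "real mat \<Rightarrow> nat \<Rightarrow> (nat \<times> nat) set \<Rightarrow> nat \<Rightarrow> nat \<Rightarrow> real" where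
  "laplacian_root_indicator W n F i j = (\<Sum>l<n. laplacian W n $$ (i,l) * of_bool (root_of F l j))"

lemma laplacian_mult_Qmat_index:
  assumes "i < n" and "j < n"
  shows "(laplacian W n * Qmat W n k) $$ (i,j)
    = (\<Sum>F\<in>forests W n k. fweight W F * laplacian_root_indicator W n F i j)"
proof -
  have "(laplacian W n * Qmat W n k) $$ (i,j)
      = (\<Sum>l<n. laplacian W n $$ (i,l) * (\<Sum>F\<in>forests W n k. fweight W F * of_bool (root_of F l j)))"
    unfolding index_mult_mat_sum[OF laplacian_carrier Qmat_carrier assms]
    using assms by (intro sum.cong) (auto simp: Qmat_index)
  also have "\<dots> = (\<Sum>F\<in>forests W n k. fweight W F * laplacian_root_indicator W n F i j)"
    unfolding laplacian_root_indicator_def sum_distrib_left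
    by (subst sum.swap) (simp add: ac_simps)
  finally show ?thesis .
qed

lemma sum_sum_antisym:
  fixes a f :: "'b \<Rightarrow> 'a::comm_ring_1"
  shows "(\<Sum>p\<in>T. \<Sum>l\<in>T. a p * a l * (f p - f l)) = 0"
proof -
  have "(\<Sum>p\<in>T. \<Sum>l\<in>T. a p * a l * f l) = (\<Sum>p\<in>T. \<Sum>l\<in>T. a p * a l * f p)"
    by (subst sum.swap) (simp add: ac_simps)
  then show ?thesis
    by (simp add: right_diff_distrib sum_subtractf)
qed

context
  fixes W :: "real mat" and n :: nat
  assumes nonneg: "\<forall>i<n. \<forall>j<n. W $$ (i,j) \<ge> 0"
begin

lemma weight_eq_0_if_not_arc:
  assumes "i < n" and "l \<in> {..<n} - {i}" and "(i,l) \<notin> arcs W n"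
  shows "W $$ (i,l) = 0"
  using assms nonneg unfolding arcs_def by force

lemma laplacian_root_indicator_sink:
  assumes "is_in_forest W n F" and "sink F i" and "i < n"
  shows "laplacian_root_indicator W n F i j
    = (\<Sum>l\<in>attachable W n F i. W $$ (i,l) * (of_bool (i = j) - of_bool (root_of F l j)))"
proof -
  have sv: "single_valued F" using assms(1) unfolding is_in_forest_iff by simp
  have "W $$ (i,l) * (of_bool (root_of F i j) - of_bool (root_of F l j))
      = (if l \<in> attachable W n F i then W $$ (i,l) * (of_bool (i = j) - of_bool (root_of F l j)) else 0)"
    if "l \<in> {..<n} - {i}" for l
  proof (cases "(l,i) \<in> F\<^sup>*")
    case True
    then have "root_of F l i" using assms(2) unfolding root_of_def by simp
    then have "root_of F l j \<longleftrightarrow> i = j" using root_of_unique[OF sv] by blast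
    then show ?thesis using True root_of_sink[OF assms(2)] unfolding attachable_def by auto
  next
    case False
    then show ?thesis
      using root_of_sink[OF assms(2)] weight_eq_0_if_not_arc[OF assms(3) that]
      unfolding attachable_def by auto
  qed
  then have "laplacian_root_indicator W n F i j
      = (\<Sum>l\<in>{..<n} - {i}. if l \<in> attachable W n F i
           then W $$ (i,l) * (of_bool (i = j) - of_bool (root_of F l j)) else 0)"
    unfolding laplacian_root_indicator_def laplacian_row_sum[OF assms(3)] by (intro sum.cong) auto
  also have "\<dots> = (\<Sum>l\<in>attachable W n F i. W $$ (i,l) * (of_bool (i = j) - of_bool (root_of F l j)))"
    using arcs_subset by (subst sum.inter_restrict[symmetric]) (auto simp: attachable_def arcs_def intro: sum.cong)
  finally show ?thesis .
qed

lemma laplacian_root_indicator_insert_arc: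
  assumes "is_in_forest W n K" and "sink K i" and "p \<in> attachable W n K i" and "i < n"
  shows "laplacian_root_indicator W n (insert (i,p) K) i j
    = (\<Sum>l\<in>{l \<in> {..<n} - {i}. (l,i) \<notin> K\<^sup>*}. W $$ (i,l) * (of_bool (root_of K p j) - of_bool (root_of K l j)))"
proof -
  note root_of_G = root_of_insert_arc[OF assms(1,2), of p]
  have "(i,p) \<in> arcs W n" "(p,i) \<notin> K\<^sup>*" using assms(3) unfolding attachable_def by auto
  then have "laplacian_root_indicator W n (insert (i,p) K) i j
      = (\<Sum>l\<in>{..<n} - {i}. if (l,i) \<notin> K\<^sup>*
           then W $$ (i,l) * (of_bool (root_of K p j) - of_bool (root_of K l j)) else 0)"
    unfolding laplacian_root_indicator_def laplacian_row_sum[OF assms(4)]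
    by (intro sum.cong) (auto simp: root_of_G)
  also have "\<dots> = (\<Sum>l\<in>{l \<in> {..<n} - {i}. (l,i) \<notin> K\<^sup>*}.
      W $$ (i,l) * (of_bool (root_of K p j) - of_bool (root_of K l j)))"
    by (rule sum.inter_filter[symmetric]) simp
  finally show ?thesis .
qed

lemma sum_not_sink_laplacian_root_indicator:
  assumes "i < n"
  shows "(\<Sum>F\<in>{F \<in> forests W n k. \<not> sink F i}. fweight W F * laplacian_root_indicator W n F i j) = 0"
proof (cases k)
  case 0
  then have "{F \<in> forests W n k. \<not> sink F i} = {}"
    using forestsD(2,3) unfolding sink_def by fastforce
  then show ?thesis by (simp only: sum.empty)
next
  case (Suc k')
  have "(\<Sum>p\<in>attachable W n K i. fweight W (insert (i,p) K) * laplacian_root_indicator W n (insert (i,p) K) i j) = 0"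
    if K: "K \<in> forests W n k'" and "sink K i" for K
  proof -
    \<comment> \<open>Inserting \<open>(i,p)\<close> moves only the vertices reaching \<open>i\<close>, so the summands are antisymmetric in \<open>p\<close> and \<open>l\<close>.\<close>
    define T where "T = {l \<in> {..<n} - {i}. (l,i) \<notin> K\<^sup>*}"
    define f where "f l = (of_bool (root_of K l j) :: real)" for l
    have summand: "fweight W (insert (i,p) K) * laplacian_root_indicator W n (insert (i,p) K) i j
        = fweight W K * (W $$ (i,p) * (\<Sum>l\<in>T. W $$ (i,l) * (f p - f l)))"
      if "p \<in> attachable W n K i" for p
    proof -
      have "(i,p) \<notin> K" using \<open>sink K i\<close> unfolding sink_def by simp
      then show ?thesis
        using laplacian_root_indicator_insert_arc[OF forestsD(1)[OF K] \<open>sink K i\<close> that assms]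
          fweight_insert[OF forestsD(2)[OF K]]
        unfolding T_def f_def by simp
    qed
    have "(\<Sum>p\<in>attachable W n K i. fweight W (insert (i,p) K) * laplacian_root_indicator W n (insert (i,p) K) i j)
        = (\<Sum>p\<in>attachable W n K i. fweight W K * (W $$ (i,p) * (\<Sum>l\<in>T. W $$ (i,l) * (f p - f l))))"
      using summand by (rule sum.cong[OF refl])
    also have "\<dots> = fweight W K * (\<Sum>p\<in>attachable W n K i. W $$ (i,p) * (\<Sum>l\<in>T. W $$ (i,l) * (f p - f l)))"
      by (rule sum_distrib_left[symmetric])
    also have "(\<Sum>p\<in>attachable W n K i. W $$ (i,p) * (\<Sum>l\<in>T. W $$ (i,l) * (f p - f l)))
        = (\<Sum>p\<in>T. W $$ (i,p) * (\<Sum>l\<in>T. W $$ (i,l) * (f p - f l)))"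
      using weight_eq_0_if_not_arc[OF assms]
      by (intro sum.mono_neutral_left) (auto simp: T_def attachable_def arcs_def)
    also have "\<dots> = 0"
      using sum_sum_antisym[of "\<lambda>l. W $$ (i,l)" f T] by (simp add: sum_distrib_left ac_simps)
    finally show ?thesis by simp
  qed
  then show ?thesis
    unfolding Suc sum_forests_Suc_not_sink by simp
qed

lemma diag_sigma_minus_Qmat_Suc:
  assumes "i < n" and "j < n"
  shows "of_bool (i = j) * sigma W n (Suc k) - Qmat W n (Suc k) $$ (i,j)
    = (\<Sum>H\<in>{H \<in> forests W n k. sink H i}. fweight W H * laplacian_root_indicator W n H i j)"
proof -
  define g where "g G = fweight W G * (of_bool (i = j) - of_bool (root_of G i j))" for G
  have "of_bool (i = j) * sigma W n (Suc k) - Qmat W n (Suc k) $$ (i,j) = (\<Sum>G\<in>forests W n (Suc k). g G)"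
    unfolding sigma_eq_sum_forests Qmat_index[OF assms] g_def
    by (simp add: sum_distrib_left sum_subtractf algebra_simps)
  also have "\<dots> = (\<Sum>G\<in>{G \<in> forests W n (Suc k). \<not> sink G i}. g G)"
    using root_of_sink unfolding g_def by (intro sum.mono_neutral_right finite_forests) auto
  also have "\<dots> = (\<Sum>H\<in>{H \<in> forests W n k. sink H i}. \<Sum>l\<in>attachable W n H i. g (insert (i,l) H))"
    by (rule sum_forests_Suc_not_sink)
  also have "\<dots> = (\<Sum>H\<in>{H \<in> forests W n k. sink H i}. fweight W H * laplacian_root_indicator W n H i j)"
  proof (intro sum.cong refl)
    fix H assume "H \<in> {H \<in> forests W n k. sink H i}"
    then have H: "is_in_forest W n H" "finite H" and "sink H i"
      using forestsD by auto
    have "g (insert (i,l) H) = fweight W H * (W $$ (i,l) * (of_bool (i = j) - of_bool (root_of H l j)))"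
      if "l \<in> attachable W n H i" for l
    proof -
      have "(i,l) \<notin> H" using \<open>sink H i\<close> unfolding sink_def by simp
      moreover have "(i,l) \<in> arcs W n" "(l,i) \<notin> H\<^sup>*" using that unfolding attachable_def by auto
      ultimately show ?thesis
        unfolding g_def using root_of_insert_arc[OF H(1) \<open>sink H i\<close>] fweight_insert[OF H(2)] by simp
    qed
    then show "(\<Sum>l\<in>attachable W n H i. g (insert (i,l) H)) = fweight W H * laplacian_root_indicator W n H i j"
      unfolding laplacian_root_indicator_sink[OF H(1) \<open>sink H i\<close> assms(1)] sum_distrib_left
      by (intro sum.cong) auto
  qed
  finally show ?thesis .
qed

lemma Qmat_Suc: "Qmat W n (Suc k) = sigma W n (Suc k) \<cdot>\<^sub>m 1\<^sub>m n - laplacian W n * Qmat W n k"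
proof (rule eq_matI)
  fix i j assume "i < dim_row (sigma W n (Suc k) \<cdot>\<^sub>m 1\<^sub>m n - laplacian W n * Qmat W n k)"
    and "j < dim_col (sigma W n (Suc k) \<cdot>\<^sub>m 1\<^sub>m n - laplacian W n * Qmat W n k)"
  then have ij: "i < n" "j < n" using laplacian_carrier[of W n] Qmat_carrier[of W n k] by auto
  have "(laplacian W n * Qmat W n k) $$ (i,j)
      = (\<Sum>F\<in>{F \<in> forests W n k. sink F i}. fweight W F * laplacian_root_indicator W n F i j)
      + (\<Sum>F\<in>{F \<in> forests W n k. \<not> sink F i}. fweight W F * laplacian_root_indicator W n F i j)"
    unfolding laplacian_mult_Qmat_index[OF ij]
    by (subst sum.union_disjoint[symmetric]) (auto intro: sum.cong simp: finite_forests)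
  also have "\<dots> = of_bool (i = j) * sigma W n (Suc k) - Qmat W n (Suc k) $$ (i,j)"
    using diag_sigma_minus_Qmat_Suc[OF ij] sum_not_sink_laplacian_root_indicator[OF ij(1)] by simp
  finally show "Qmat W n (Suc k) $$ (i,j) = (sigma W n (Suc k) \<cdot>\<^sub>m 1\<^sub>m n - laplacian W n * Qmat W n k) $$ (i,j)"
    using ij laplacian_carrier[of W n] Qmat_carrier[of W n k] by simp
qed (use laplacian_carrier[of W n] Qmat_carrier[of W n k] Qmat_carrier[of W n "Suc k"] in auto)

end

lemma is_in_forest_empty: "is_in_forest W n {}"
  unfolding is_in_forest_iff root_of_def sink_def by auto

lemma forests_0: "forests W n 0 = {{}}"
proof -
  have "F = {}" if "F \<in> forests W n 0" for F
    using forestsD(2,3)[OF that] by simp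
  moreover have "{} \<in> forests W n 0" unfolding forests_def using is_in_forest_empty by simp
  ultimately show ?thesis by blast
qed

lemma sigma_0: "sigma W n 0 = 1"
  unfolding sigma_eq_sum_forests forests_0 fweight_def by simp

lemma Qmat_0: "Qmat W n 0 = 1\<^sub>m n"
proof (rule eq_matI)
  fix i j assume "i < dim_row (1\<^sub>m n)" and "j < dim_col (1\<^sub>m n)"
  moreover have "root_of {} i j \<longleftrightarrow> j = i" by (rule root_of_sink) (simp add: sink_def)
  ultimately show "Qmat W n 0 $$ (i,j) = 1\<^sub>m n $$ (i,j)"
    by (simp add: Qmat_index forests_0 fweight_def)
qed (use Qmat_carrier[of W n 0] in auto)

lemma laplacian_mult_Qmat_commute:
  assumes "\<forall>i<n. \<forall>j<n. W $$ (i,j) \<ge> 0"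
  shows "laplacian W n * Qmat W n k = Qmat W n k * laplacian W n"
proof (induction k)
  case 0
  show ?case using laplacian_carrier[of W n] by (simp add: Qmat_0)
next
  case (Suc k)
  let ?L = "laplacian W n" and ?Q = "Qmat W n k" and ?S = "sigma W n (Suc k) \<cdot>\<^sub>m 1\<^sub>m n"
  have L: "?L \<in> carrier_mat n n" and Q: "?Q \<in> carrier_mat n n" and S: "?S \<in> carrier_mat n n"
    using laplacian_carrier Qmat_carrier by auto
  have LQ: "?L * ?Q \<in> carrier_mat n n" using L Q by simp
  have "?L * Qmat W n (Suc k) = ?L * ?S - ?L * (?L * ?Q)"
    unfolding Qmat_Suc[OF assms] by (rule mult_minus_distrib_mat[OF L S LQ])
  also have "?L * (?L * ?Q) = ?L * (?Q * ?L)"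
    using Suc by simp
  also have "\<dots> = (?L * ?Q) * ?L"
    by (rule assoc_mult_mat[OF L Q L, symmetric])
  also have "?L * ?S = ?S * ?L"
    using L by (simp add: mult_smult_distrib[OF L one_carrier_mat] mult_smult_assoc_mat[OF one_carrier_mat L])
  also have "?S * ?L - (?L * ?Q) * ?L = (?S - ?L * ?Q) * ?L"
    by (rule minus_mult_distrib_mat[OF S LQ L, symmetric])
  finally show ?case unfolding Qmat_Suc[OF assms] .
qed

lemma mat_trace_Qmat: "mat_trace (Qmat W n k) = of_nat (n - k) * sigma W n k"
proof -
  have "mat_trace (Qmat W n k) = (\<Sum>i<n. \<Sum>F\<in>forests W n k. fweight W F * of_bool (sink F i))"
    unfolding mat_trace_def using Qmat_carrier[of W n k]
    by (intro sum.cong) (auto simp: Qmat_index root_of_def)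
  also have "\<dots> = (\<Sum>F\<in>forests W n k. \<Sum>i<n. fweight W F * of_bool (sink F i))"
    by (rule sum.swap)
  also have "\<dots> = (\<Sum>F\<in>forests W n k. of_nat (n - k) * fweight W F)"
  proof (intro sum.cong refl)
    fix F assume F: "F \<in> forests W n k"
    have "card {i. i < n \<and> sink F i} = n - k"
      using card_add_num_trees num_trees_eq_card_sinks forestsD(1,3)[OF F] by force
    then have "card ({..<n} \<inter> {i. sink F i}) = n - k"
      by (simp add: Int_def lessThan_def)
    then show "(\<Sum>i<n. fweight W F * of_bool (sink F i)) = of_nat (n - k) * fweight W F"
      by (simp add: sum_distrib_left[symmetric] mult.commute)
  qed
  finally show ?thesis by (simp add: sigma_eq_sum_forests sum_distrib_left)
qed

lemma sigma_one_minus_Qmat_factor: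
  assumes "\<forall>i<n. \<forall>j<n. W $$ (i,j) \<ge> 0"
  obtains M where "M \<in> carrier_mat n n"
    and "sigma W n k \<cdot>\<^sub>m 1\<^sub>m n - Qmat W n k = laplacian W n * M"
    and "laplacian W n * M = M * laplacian W n"
proof (cases k)
  case 0
  have "sigma W n k \<cdot>\<^sub>m 1\<^sub>m n - Qmat W n k = laplacian W n * 0\<^sub>m n n"
    using laplacian_carrier[of W n] by (intro eq_matI) (auto simp: 0 sigma_0 Qmat_0)
  then show ?thesis
    using laplacian_carrier[of W n] by (intro that[of "0\<^sub>m n n"]) auto
next
  case (Suc k')
  have "sigma W n k \<cdot>\<^sub>m 1\<^sub>m n - Qmat W n k = laplacian W n * Qmat W n k'"
    unfolding Suc Qmat_Suc[OF assms] using laplacian_carrier[of W n] Qmat_carrier[of W n k']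
    by (intro eq_matI) auto
  with that show ?thesis
    using Qmat_carrier laplacian_mult_Qmat_commute[OF assms] by blast
qed

section \<open>The matrix \<open>Jtilde\<close>\<close>

lemma in_forest_dim_bounds:
  shows "in_forest_dim W n \<le> n"
    and "\<exists>F. is_in_forest W n F \<and> card F = n - in_forest_dim W n"
    and "is_in_forest W n F \<Longrightarrow> card F \<le> n - in_forest_dim W n"
proof -
  define S where "S = {num_trees F n | F. is_in_forest W n F}"
  have "{F. is_in_forest W n F} \<subseteq> Pow (arcs W n)"
    unfolding is_in_forest_def by auto
  then have "finite S"
    unfolding S_def using finite_subset[OF _ finite_Pow_iff[THEN iffD2, OF finite_arcs]]
    by (simp add: setcompr_eq_image)
  have min: "in_forest_dim W n = Min S"
    unfolding in_forest_dim_def S_def ..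
  moreover have "S \<noteq> {}"
    unfolding S_def using is_in_forest_empty by auto
  ultimately have "in_forest_dim W n \<in> S"
    using Min_in[OF \<open>finite S\<close>] by simp
  then obtain F0 where F0: "is_in_forest W n F0" and "num_trees F0 n = in_forest_dim W n"
    unfolding S_def by auto
  then have "card F0 + in_forest_dim W n = n" using card_add_num_trees[OF F0] by simp
  then show "in_forest_dim W n \<le> n"
    and "\<exists>F. is_in_forest W n F \<and> card F = n - in_forest_dim W n"
    using F0 by auto
  show "card F \<le> n - in_forest_dim W n" if "is_in_forest W n F"
  proof -
    have "in_forest_dim W n \<le> num_trees F n"
      unfolding min using Min_le[OF \<open>finite S\<close>] that unfolding S_def by auto
    then show ?thesis using card_add_num_trees[OF that] by simp
  qed
qed

lemma forests_above_top_empty: "forests W n (Suc (n - in_forest_dim W n)) = {}"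
  using in_forest_dim_bounds(3) unfolding forests_def by fastforce

lemma sigma_top_pos: "sigma W n (n - in_forest_dim W n) > 0"
proof -
  obtain F0 where "F0 \<in> forests W n (n - in_forest_dim W n)"
    using in_forest_dim_bounds(2) unfolding forests_def by blast
  then show ?thesis
    unfolding sigma_eq_sum_forests using fweight_pos finite_forests
    by (intro sum_pos2) (auto simp: forests_def less_imp_le)
qed

lemma laplacian_mult_Qmat_top:
  assumes "\<forall>i<n. \<forall>j<n. W $$ (i,j) \<ge> 0"
  shows "laplacian W n * Qmat W n (n - in_forest_dim W n) = 0\<^sub>m n n"
proof (rule eq_matI)
  let ?m = "n - in_forest_dim W n"
  fix i j assume "i < dim_row (0\<^sub>m n n :: real mat)" and "j < dim_col (0\<^sub>m n n :: real mat)"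
  then have ij: "i < n" "j < n" by auto
  have "Qmat W n (Suc ?m) $$ (i,j) = 0" and "sigma W n (Suc ?m) = 0"
    unfolding Qmat_index[OF ij] sigma_eq_sum_forests forests_above_top_empty by simp_all
  moreover note Qmat_Suc[OF assms, of ?m]
  ultimately have "(sigma W n (Suc ?m) \<cdot>\<^sub>m 1\<^sub>m n - laplacian W n * Qmat W n ?m) $$ (i,j) = 0"
    by simp
  then show "(laplacian W n * Qmat W n ?m) $$ (i,j) = 0\<^sub>m n n $$ (i,j)"
    using ij laplacian_carrier[of W n] Qmat_carrier[of W n ?m] \<open>sigma W n (Suc ?m) = 0\<close> by simp
qed (use laplacian_carrier[of W n] Qmat_carrier[of W n] in auto)

lemma Jtilde_eigenprojection:
  assumes nonneg: "\<forall>i<n. \<forall>j<n. W $$ (i,j) \<ge> 0"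
  defines "L \<equiv> laplacian W n" and "Z \<equiv> Jtilde W n"
  shows "L * Z = 0\<^sub>m n n" and "Z * Z = Z" and "mat_trace Z = of_nat (in_forest_dim W n)"
    and "det (L + Z) \<noteq> 0"
proof -
  define m where "m = n - in_forest_dim W n"
  define Q where "Q = Qmat W n m"
  define \<sigma> where "\<sigma> = sigma W n m"
  have L: "L \<in> carrier_mat n n" and Q: "Q \<in> carrier_mat n n"
    unfolding L_def Q_def by (rule laplacian_carrier, rule Qmat_carrier)
  have "\<sigma> > 0" unfolding \<sigma>_def m_def by (rule sigma_top_pos)
  have Z_def': "Z = (1 / \<sigma>) \<cdot>\<^sub>m Q"
    unfolding Z_def Jtilde_def Q_def \<sigma>_def m_def Let_def ..
  then have Z: "Z \<in> carrier_mat n n" using Q by simp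
  have LQ: "L * Q = 0\<^sub>m n n"
    unfolding L_def Q_def m_def by (rule laplacian_mult_Qmat_top[OF nonneg])
  then show "L * Z = 0\<^sub>m n n"
    unfolding Z_def' using L Q by (simp add: mult_smult_distrib)
  have "Q * L = 0\<^sub>m n n"
    using LQ laplacian_mult_Qmat_commute[OF nonneg] unfolding L_def Q_def by metis
  then have ZL: "Z * L = 0\<^sub>m n n"
    unfolding Z_def' using L Q by (simp add: mult_smult_assoc_mat)
  obtain M where M: "M \<in> carrier_mat n n" and factor: "\<sigma> \<cdot>\<^sub>m 1\<^sub>m n - Q = L * M"
    and comm: "L * M = M * L"
    using sigma_one_minus_Qmat_factor[OF nonneg] unfolding L_def Q_def \<sigma>_def by blast
  have "1\<^sub>m n - Z = (1 / \<sigma>) \<cdot>\<^sub>m (\<sigma> \<cdot>\<^sub>m 1\<^sub>m n - Q)"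
    unfolding Z_def' using Q \<open>\<sigma> > 0\<close> by (intro eq_matI) (auto simp: field_simps)
  also have "\<dots> = L * ((1 / \<sigma>) \<cdot>\<^sub>m M)"
    unfolding factor using L M by (simp add: mult_smult_distrib)
  finally have "1\<^sub>m n - Z = L * ((1 / \<sigma>) \<cdot>\<^sub>m M)" .
  moreover have "L * ((1 / \<sigma>) \<cdot>\<^sub>m M) = ((1 / \<sigma>) \<cdot>\<^sub>m M) * L"
    using L M comm by (simp add: mult_smult_distrib mult_smult_assoc_mat)
  ultimately show "Z * Z = Z" and "det (L + Z) \<noteq> 0"
    using idempotent_and_det_add_nonzero[OF L Z smult_carrier_mat[OF M] ZL] by auto
  have "mat_trace Q = of_nat (in_forest_dim W n) * \<sigma>"
    unfolding Q_def \<sigma>_def m_def mat_trace_Qmat using in_forest_dim_bounds(1) by simp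
  then show "mat_trace Z = of_nat (in_forest_dim W n)"
    unfolding Z_def' using Q \<open>\<sigma> > 0\<close> by (simp add: mat_trace_def sum_divide_distrib[symmetric])
qed

theorem proposition10:
  fixes W :: "real mat" and n :: nat and \<alpha> :: complex
  assumes "n > 1"
    and "W \<in> carrier_mat n n"
    and "\<forall>i<n. \<forall>j<n. W $$ (i,j) \<ge> 0"
    and "\<forall>i<n. W $$ (i,i) = 0"
  shows "(\<exists>q. char_poly (cmat (laplacian W n)) = monom 1 (in_forest_dim W n) * q
            \<and> poly q 0 \<noteq> 0
            \<and> char_poly (cmat (laplacian W n) + \<alpha> \<cdot>\<^sub>m cmat (Jtilde W n))
                = [:-\<alpha>, 1:] ^ (in_forest_dim W n) * q)
      \<and> (\<alpha> \<noteq> 0 \<longrightarrow> det (cmat (laplacian W n) + \<alpha> \<cdot>\<^sub>m cmat (Jtilde W n)) \<noteq> 0)"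
proof -
  note J = Jtilde_eigenprojection[OF assms(3)]
  show ?thesis
    by (rule char_poly_add_smult_idempotent_factor_of_real
        [OF laplacian_carrier Jtilde_carrier J(1-3) in_forest_dim_bounds(1) J(4)])
qed

end
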